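(* Fix an agent $i$ and let $\gamma^{i}\ge 0$ be a $\mathbb{G}^{i}$-progressively measurable process, locally integrable pathwise. Suppose that $\gamma^{i}-r$ is (pathwise) increasing and that Condition (C) holds for $\gamma^i$. Then $$\tau^{i}:=\inf\{t:\ \gamma^{i}_{t}-r_{t}\ge 0\}$$ belongs to $\mathcal{T}^{i}$ and is a solution of agent $i$'s optimal stopping problem $$\sup_{\tau\in\mathcal{T}^{i}} E\Big[\exp\Big(\int_{0}^{\tau} r_{s}\,ds\Big)\mathbf{1}_{\{\theta^{i}>\tau\}\cup\{\theta^{i}=\infty\}}\Big].$$ If the value of this problem is finite, then $\tau^{i}$ is the minimal element among all solutions; if moreover $\gamma^{i}-r$ is strictly increasing, then $\tau^{i}$ is the unique solution.
   Context: Let $(\Omega,\mathcal F,P)$ be a probability space. For each agent $i$ in an index set $I$, let $\mathbb G^i=(\mathcal G^i_t)_{t\ge0}$ be a right-continuous filtration on it, and let $\mathcal E$ be an exponentially distributed random variable with mean $1$ which is independent of $\mathcal G^i_\infty$ for every $i\in I$. $\mathcal T^i$ denotes the set of all $\mathbb G^i$-stopping times (with values in $[0,\infty]$). Let $r$ be a real-valued process, locally integrable pathwise (Lebesgue-integrable on bounded intervals), which is $\mathbb G^i$-progressively measurable for every $i$. For a process $\gamma^i\ge0$ (the default intensity of agent $i$), set $\theta^{i}=\inf\{t:\ \int_0^t\gamma^i_s\,ds=\mathcal E\}$. Convention: $\int_0^\infty r_s\,ds:=-\infty$ if $\int_0^\infty r_s^+ds=\int_0^\infty r^-_s ds=\infty$.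 Condition (C) for $\gamma^i$: either $r^+$ is integrable on $[0,\infty)$ $P$-a.s., or $\inf\{t:\ \gamma^i_t-r_t\ge0\}<\infty$ $P$-a.s. "Increasing" means non-decreasing; "strictly increasing" means strictly. *)

theory Defs
  imports "HOL-Probability.Probability"
begin

definition right_cont_filtration :: "'a measure \<Rightarrow> (real \<Rightarrow> 'a measure) \<Rightarrow> bool" where
  "right_cont_filtration M G \<longleftrightarrow>
     (\<forall>t. space (G t) = space M \<and> sets (G t) \<subseteq> sets M) \<and>
     (\<forall>s t. 0 \<le> s \<longrightarrow> s \<le> t \<longrightarrow> sets (G s) \<subseteq> sets (G t)) \<and>
     (\<forall>t\<ge>0. sets (G t) = (\<Inter>s\<in>{t<..}. sets (G s)))"

definition Ginf :: "'a measure \<Rightarrow> (real \<Rightarrow> 'a measure) \<Rightarrow> 'a set set" where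
  "Ginf M G = sigma_sets (space M) (\<Union>t\<in>{0..}. sets (G t))"

definition stopping_time_inf :: "'a measure \<Rightarrow> (real \<Rightarrow> 'a measure) \<Rightarrow> ('a \<Rightarrow> ereal) \<Rightarrow> bool" where
  "stopping_time_inf M G T \<longleftrightarrow>
     (\<forall>x\<in>space M. 0 \<le> T x) \<and> (\<forall>t\<ge>0. {x\<in>space M. T x \<le> ereal t} \<in> sets (G t))"

definition progressive :: "(real \<Rightarrow> 'a measure) \<Rightarrow> (real \<Rightarrow> 'a \<Rightarrow> real) \<Rightarrow> bool" where
  "progressive G X \<longleftrightarrow>
     (\<forall>t\<ge>0. (\<lambda>(s, x). X s x) \<in> borel_measurable (restrict_space lborel {0..t} \<Otimes>\<^sub>M G t))"

definition loc_int_pathwise :: "'a measure \<Rightarrow> (real \<Rightarrow> 'a \<Rightarrow> real) \<Rightarrow> bool" where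
  "loc_int_pathwise M X \<longleftrightarrow> (\<forall>x\<in>space M. \<forall>t\<ge>0. set_integrable lborel {0..t} (\<lambda>s. X s x))"

(* int_0^T r_s ds for T in [0,oo], with the convention int_0^oo r := -oo when both
   int r^+ and int r^- are infinite *)
definition cum_int :: "(real \<Rightarrow> 'a \<Rightarrow> real) \<Rightarrow> 'a \<Rightarrow> ereal \<Rightarrow> ereal" where
  "cum_int r x T =
    (if T = \<infinity> then
       (let P = (\<integral>\<^sup>+ s\<in>{0..}. ennreal (max 0 (r s x)) \<partial>lborel);
            N = (\<integral>\<^sup>+ s\<in>{0..}. ennreal (max 0 (- r s x)) \<partial>lborel)
        in if P = \<infinity> \<and> N = \<infinity> then - \<infinity> else enn2ereal P - enn2ereal N)
     else ereal (\<integral>s\<in>{0..real_of_ereal T}. r s x \<partial>lborel))"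

definition exp_ext :: "ereal \<Rightarrow> ennreal" where
  "exp_ext z = (if z = \<infinity> then \<infinity> else if z = - \<infinity> then 0 else ennreal (exp (real_of_ereal z)))"

(* default time theta = inf{t : int_0^t gamma = E}  (inf {} = oo) *)
definition default_time :: "(real \<Rightarrow> 'a \<Rightarrow> real) \<Rightarrow> ('a \<Rightarrow> real) \<Rightarrow> 'a \<Rightarrow> ereal" where
  "default_time \<gamma> E x = Inf {ereal t | t. 0 \<le> t \<and> (\<integral>s\<in>{0..t}. \<gamma> s x \<partial>lborel) = E x}"

definition payoff :: "'a measure \<Rightarrow> (real \<Rightarrow> 'a \<Rightarrow> real) \<Rightarrow> ('a \<Rightarrow> ereal) \<Rightarrow> ('a \<Rightarrow> ereal) \<Rightarrow> ennreal" where
  "payoff M r \<theta> T = (\<integral>\<^sup>+ x. exp_ext (cum_int r x (T x)) *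
       indicator {x. \<theta> x > T x \<or> \<theta> x = \<infinity>} x \<partial>M)"

definition optimal_stopping :: "'a measure \<Rightarrow> (real \<Rightarrow> 'a measure) \<Rightarrow> (real \<Rightarrow> 'a \<Rightarrow> real) \<Rightarrow> ('a \<Rightarrow> ereal) \<Rightarrow> ('a \<Rightarrow> ereal) \<Rightarrow> bool" where
  "optimal_stopping M G r \<theta> T \<longleftrightarrow> stopping_time_inf M G T \<and>
     (\<forall>S. stopping_time_inf M G S \<longrightarrow> payoff M r \<theta> S \<le> payoff M r \<theta> T)"

definition value_os :: "'a measure \<Rightarrow> (real \<Rightarrow> 'a measure) \<Rightarrow> (real \<Rightarrow> 'a \<Rightarrow> real) \<Rightarrow> ('a \<Rightarrow> ereal) \<Rightarrow> ennreal" where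
  "value_os M G r \<theta> = (SUP S\<in>{S. stopping_time_inf M G S}. payoff M r \<theta> S)"

end

theory Submission
  imports Defs
begin

text \<open>
  Given \<open>\<G>\<^sub>\<infinity>\<close>, the default time \<open>\<theta>\<close> exceeds \<open>T\<close> exactly when the cumulative hazard
  \<open>\<integral>\<^sub>0\<^sup>T \<gamma>\<close> stays below the independent exponential variable \<open>E\<close>, which happens with
  probability \<open>exp (-\<integral>\<^sub>0\<^sup>T \<gamma>)\<close>. Hence the payoff of a stopping time \<open>S\<close> is the expectation of
  \<open>exp (W S)\<close> with \<open>W T = \<integral>\<^sub>0\<^sup>T (r - \<gamma>)\<close>. As \<open>\<gamma> - r\<close> is increasing, the integrand
  \<open>r - \<gamma>\<close> is positive before \<open>\<tau>\<close> and non-positive after it, so \<open>\<tau>\<close> maximises \<open>W\<close> path by path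
  and is optimal. If the value is finite, an optimal \<open>S\<close> must attain this pathwise maximum almost
  surely; since \<open>W\<close> increases strictly before \<open>\<tau>\<close>, this forces \<open>S \<ge> \<tau>\<close>, and strict monotonicity
  of \<open>\<gamma> - r\<close> makes \<open>\<tau>\<close> the only maximiser.
\<close>

definition net_gain :: "ennreal \<Rightarrow> ennreal \<Rightarrow> ereal" where
  "net_gain p b = (if b = \<infinity> then -\<infinity> else enn2ereal p - enn2ereal b)"

text \<open>The convention of \<open>cum_int\<close> on \<open>[0, \<infinity>)\<close>.\<close>

definition cum_diff :: "ennreal \<Rightarrow> ennreal \<Rightarrow> ereal" where
  "cum_diff p n = (if p = \<infinity> \<and> n = \<infinity> then -\<infinity> else enn2ereal p - enn2ereal n)"

text \<open>The tail \<open>P (E > a)\<close> of a standard exponential variable \<open>E\<close>.\<close>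

definition exp_survival :: "ennreal \<Rightarrow> ennreal" where
  "exp_survival a = (if a = \<infinity> then 0 else ennreal (exp (- enn2real a)))"

lemma net_gain_add_le:
  assumes "p' \<le> b'"
  shows "net_gain (p + p') (b + b') \<le> net_gain p b"
  using assms
  by (cases p rule: ennreal_cases; cases p' rule: ennreal_cases;
      cases b rule: ennreal_cases; cases b' rule: ennreal_cases)
     (auto simp: net_gain_def top_unique ennreal_plus[symmetric] simp del: ennreal_plus)

lemma net_gain_le_add:
  assumes "b' \<le> p'" and "b + b' \<noteq> \<infinity>"
  shows "net_gain p b \<le> net_gain (p + p') (b + b')"
  using assms
  by (cases p rule: ennreal_cases; cases p' rule: ennreal_cases;
      cases b rule: ennreal_cases; cases b' rule: ennreal_cases)
     (auto simp: net_gain_def top_unique ennreal_plus[symmetric] simp del: ennreal_plus)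

lemma net_gain_less_add:
  assumes "b' < p'" and "b + b' \<noteq> \<infinity>" and "p \<noteq> \<infinity>"
  shows "net_gain p b < net_gain (p + p') (b + b')"
  using assms
  by (cases p rule: ennreal_cases; cases p' rule: ennreal_cases;
      cases b rule: ennreal_cases; cases b' rule: ennreal_cases)
     (auto simp: net_gain_def top_unique ennreal_plus[symmetric] ennreal_less_iff
       simp del: ennreal_plus)

lemma net_gain_add_less:
  assumes "p' \<le> b'" and "b + b' \<noteq> \<infinity> \<Longrightarrow> p' < b'" and "b \<noteq> \<infinity>" and "p \<noteq> \<infinity>"
  shows "net_gain (p + p') (b + b') < net_gain p b"
  using assms
  by (cases p rule: ennreal_cases; cases p' rule: ennreal_cases;
      cases b rule: ennreal_cases; cases b' rule: ennreal_cases)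
     (auto simp: net_gain_def top_unique ennreal_plus[symmetric] ennreal_less_iff
       simp del: ennreal_plus)

lemma exp_ext_mono: "a \<le> b \<Longrightarrow> exp_ext a \<le> exp_ext b"
  by (cases a; cases b) (auto simp: exp_ext_def ennreal_leI)

lemma exp_ext_strict_mono: "a < b \<Longrightarrow> exp_ext a < exp_ext b"
  by (cases a; cases b) (auto simp: exp_ext_def ennreal_less_iff)

lemma exp_ext_cum_diff_mult_exp_survival:
  "exp_ext (cum_diff p n) * exp_survival a = exp_ext (net_gain p (n + a))"
  by (cases p rule: ennreal_cases; cases n rule: ennreal_cases; cases a rule: ennreal_cases)
     (auto simp: exp_survival_def net_gain_def cum_diff_def exp_ext_def ennreal_mult_top
       ennreal_plus[symmetric] ennreal_mult[symmetric] mult_exp_exp simp del: ennreal_plus)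

lemma measurable_exp_ext[measurable (raw)]:
  assumes [measurable]: "f \<in> borel_measurable M"
  shows "(\<lambda>x. exp_ext (f x)) \<in> borel_measurable M"
  unfolding exp_ext_def by measurable

lemma measurable_cum_diff[measurable (raw)]:
  assumes [measurable]: "f \<in> borel_measurable M" "g \<in> borel_measurable M"
  shows "(\<lambda>x. cum_diff (f x) (g x)) \<in> borel_measurable M"
  unfolding cum_diff_def by measurable

lemma measurable_net_gain[measurable (raw)]:
  assumes [measurable]: "f \<in> borel_measurable M" "g \<in> borel_measurable M"
  shows "(\<lambda>x. net_gain (f x) (g x)) \<in> borel_measurable M"
  unfolding net_gain_def by measurable

definition time_upto :: "ereal \<Rightarrow> real set" where
  "time_upto T = {s. 0 \<le> s \<and> ereal s \<le> T}"

definition time_between :: "ereal \<Rightarrow> ereal \<Rightarrow> real set" where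
  "time_between a b = {s. a < ereal s \<and> ereal s \<le> b}"

lemma time_upto_ereal: "time_upto (ereal t) = {0..t}"
  by (auto simp: time_upto_def)

lemma time_upto_infinity: "time_upto \<infinity> = {0..}"
  by (auto simp: time_upto_def)

lemma sets_time_upto[measurable]: "time_upto T \<in> sets borel"
  unfolding time_upto_def by (rule pred_Collect_borel) measurable

lemma sets_time_between[measurable]: "time_between a b \<in> sets borel"
  unfolding time_between_def by (rule pred_Collect_borel) measurable

lemma ereal_less_imp_pos: "0 \<le> (a::ereal) \<Longrightarrow> a < ereal s \<Longrightarrow> 0 < s"
  using order.strict_trans1[of 0 a "ereal s"] by simp

lemma nn_integral_time_upto_split:
  assumes [measurable]: "f \<in> borel_measurable borel" and "0 \<le> a" "a \<le> b"
  shows "(\<integral>\<^sup>+s\<in>time_upto b. f s \<partial>lborel)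
    = (\<integral>\<^sup>+s\<in>time_upto a. f s \<partial>lborel) + (\<integral>\<^sup>+s\<in>time_between a b. f s \<partial>lborel)"
proof -
  have "indicator (time_upto b) s = (indicator (time_upto a) s + indicator (time_between a b) s :: ennreal)"
    for s
    using assms(2,3) ereal_less_imp_pos[OF assms(2), of s] order_trans[of "ereal s" a b]
    by (auto simp: time_upto_def time_between_def indicator_def not_less)
  then have "(\<integral>\<^sup>+s\<in>time_upto b. f s \<partial>lborel)
      = (\<integral>\<^sup>+s. f s * indicator (time_upto a) s + f s * indicator (time_between a b) s \<partial>lborel)"
    by (simp add: distrib_left)
  also have "\<dots> = (\<integral>\<^sup>+s\<in>time_upto a. f s \<partial>lborel) + (\<integral>\<^sup>+s\<in>time_between a b. f s \<partial>lborel)"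
    by (rule nn_integral_add) measurable
  finally show ?thesis .
qed

lemma nn_integral_less_on_interval:
  fixes f h :: "real \<Rightarrow> ennreal"
  assumes [measurable]: "f \<in> borel_measurable borel" "h \<in> borel_measurable borel" "A \<in> sets borel"
    and fin: "(\<integral>\<^sup>+s\<in>A. f s \<partial>lborel) \<noteq> \<infinity>"
    and le: "AE s in lborel. s \<in> A \<longrightarrow> f s \<le> h s"
    and "t < u" and "{t<..<u} \<subseteq> A" and less: "\<And>s. s \<in> {t<..<u} \<Longrightarrow> f s < h s"
  shows "(\<integral>\<^sup>+s\<in>A. f s \<partial>lborel) < (\<integral>\<^sup>+s\<in>A. h s \<partial>lborel)"
proof (rule nn_integral_less)
  show "AE s in lborel. f s * indicator A s \<le> h s * indicator A s"
    using le by eventually_elim (simp add: indicator_def)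
  show "\<not> (AE s in lborel. h s * indicator A s \<le> f s * indicator A s)"
  proof
    assume "AE s in lborel. h s * indicator A s \<le> f s * indicator A s"
    then have "AE s in lborel. s \<notin> {t<..<u}"
      by eventually_elim (use less \<open>{t<..<u} \<subseteq> A\<close> in \<open>force simp: not_le[symmetric]\<close>)
    moreover have "(AE s in lborel. s \<notin> {t<..<u}) \<longleftrightarrow> emeasure lborel {t<..<u} = 0"
      by (rule AE_iff_measurable) auto
    ultimately show False using \<open>t < u\<close> by simp
  qed
qed (use fin in auto)

lemma set_nn_integral_finite_if_set_integrable:
  assumes "set_integrable lborel A f" and "\<And>s. \<phi> s \<le> ennreal \<bar>f s\<bar>"
  shows "(\<integral>\<^sup>+s\<in>A. \<phi> s \<partial>lborel) \<noteq> \<infinity>"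
proof -
  have "(\<integral>\<^sup>+s\<in>A. \<phi> s \<partial>lborel) \<le> (\<integral>\<^sup>+s. ennreal (norm (indicator A s *\<^sub>R f s)) \<partial>lborel)"
    using assms(2) by (intro nn_integral_mono) (auto simp: indicator_def)
  also have "\<dots> < \<infinity>"
    using assms(1) unfolding set_integrable_def integrable_iff_bounded by simp
  finally show ?thesis by simp
qed

lemma set_nn_integral_add:
  assumes [measurable]: "f \<in> borel_measurable borel" "h \<in> borel_measurable borel" "A \<in> sets borel"
  shows "(\<integral>\<^sup>+s\<in>A. f s + h s \<partial>lborel) = (\<integral>\<^sup>+s\<in>A. f s \<partial>lborel) + (\<integral>\<^sup>+s\<in>A. h s \<partial>lborel)"
proof -
  have "(\<integral>\<^sup>+s\<in>A. f s + h s \<partial>lborel) = (\<integral>\<^sup>+s. f s * indicator A s + h s * indicator A s \<partial>lborel)"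
    by (intro nn_integral_cong) (simp add: distrib_right)
  also have "\<dots> = (\<integral>\<^sup>+s\<in>A. f s \<partial>lborel) + (\<integral>\<^sup>+s\<in>A. h s \<partial>lborel)"
    by (rule nn_integral_add) measurable
  finally show ?thesis .
qed

lemma set_lebesgue_integral_eq_pos_minus_neg:
  assumes "set_integrable lborel A f"
  shows "(\<integral>s\<in>A. f s \<partial>lborel) = enn2real (\<integral>\<^sup>+s\<in>A. ennreal (max 0 (f s)) \<partial>lborel)
                                - enn2real (\<integral>\<^sup>+s\<in>A. ennreal (max 0 (- f s)) \<partial>lborel)"
proof -
  have "(\<integral>s\<in>A. f s \<partial>lborel) = enn2real (\<integral>\<^sup>+s. ennreal (indicator A s *\<^sub>R f s) \<partial>lborel)
      - enn2real (\<integral>\<^sup>+s. ennreal (- (indicator A s *\<^sub>R f s)) \<partial>lborel)"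
    using assms unfolding set_lebesgue_integral_def set_integrable_def by (rule real_lebesgue_integral_def)
  also have "(\<integral>\<^sup>+s. ennreal (indicator A s *\<^sub>R f s) \<partial>lborel) = (\<integral>\<^sup>+s\<in>A. ennreal (max 0 (f s)) \<partial>lborel)"
    by (intro nn_integral_cong) (auto simp: indicator_def max_def ennreal_neg)
  also have "(\<integral>\<^sup>+s. ennreal (- (indicator A s *\<^sub>R f s)) \<partial>lborel) = (\<integral>\<^sup>+s\<in>A. ennreal (max 0 (- f s)) \<partial>lborel)"
    by (intro nn_integral_cong) (auto simp: indicator_def max_def ennreal_neg)
  finally show ?thesis .
qed

lemma measurable_set_nn_integral_time_upto:
  assumes [measurable]: "S \<in> borel_measurable N"
    and [measurable]: "(\<lambda>z. h (fst z) (snd z)) \<in> borel_measurable (N \<Otimes>\<^sub>M lborel)"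
  shows "(\<lambda>x. \<integral>\<^sup>+s\<in>time_upto (S x). h x s \<partial>lborel) \<in> borel_measurable N"
proof (rule lborel.borel_measurable_nn_integral)
  have "(\<lambda>(x, s). h x s * indicator (time_upto (S x)) s)
      = (\<lambda>z. h (fst z) (snd z) * (if 0 \<le> snd z \<and> ereal (snd z) \<le> S (fst z) then 1 else 0))"
    by (auto simp: time_upto_def indicator_def fun_eq_iff)
  also have "\<dots> \<in> borel_measurable (N \<Otimes>\<^sub>M lborel)" by measurable
  finally show "(\<lambda>(x, s). h x s * indicator (time_upto (S x)) s) \<in> borel_measurable (N \<Otimes>\<^sub>M lborel)" .
qed

section \<open>Pathwise optimality of the entry time\<close>

definition gain_rate :: "(real \<Rightarrow> real) \<Rightarrow> real \<Rightarrow> ennreal" where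
  "gain_rate r s = ennreal (max 0 (r s))"

definition loss_rate :: "(real \<Rightarrow> real) \<Rightarrow> (real \<Rightarrow> real) \<Rightarrow> real \<Rightarrow> ennreal" where
  "loss_rate r g s = ennreal (max 0 (- r s)) + ennreal (g s)"

text \<open>For a default intensity \<open>g\<close>, \<open>exp (log_payoff r g T)\<close> is \<open>exp (\<integral>\<^sub>0\<^sup>T r)\<close> times the
  conditional probability of survival beyond \<open>T\<close>. Splitting \<open>r\<close> into its positive and negative
  parts keeps both integrals in \<open>[0, \<infinity>]\<close>; an infinite loss means a zero payoff.\<close>

definition log_payoff :: "(real \<Rightarrow> real) \<Rightarrow> (real \<Rightarrow> real) \<Rightarrow> ereal \<Rightarrow> ereal" where
  "log_payoff r g T = net_gain (\<integral>\<^sup>+s\<in>time_upto T. gain_rate r s \<partial>lborel)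
                               (\<integral>\<^sup>+s\<in>time_upto T. loss_rate r g s \<partial>lborel)"

definition entry_time :: "(real \<Rightarrow> real) \<Rightarrow> (real \<Rightarrow> real) \<Rightarrow> ereal" where
  "entry_time r g = Inf {ereal t | t. 0 \<le> t \<and> 0 \<le> g t - r t}"

lemma entry_time_nonneg: "0 \<le> entry_time r g"
  unfolding entry_time_def by (rule Inf_greatest) auto

lemma before_entry_time:
  assumes "0 \<le> s" and "ereal s < entry_time r g"
  shows "g s - r s < 0"
proof (rule ccontr)
  assume "\<not> g s - r s < 0"
  with \<open>0 \<le> s\<close> have "entry_time r g \<le> ereal s" unfolding entry_time_def by (intro Inf_lower) auto
  with assms(2) show False by simp
qed

lemma after_entry_time:
  assumes mono: "mono_on {0..} (\<lambda>t. g t - r t)" and "0 \<le> s" "entry_time r g < ereal s"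
  shows "0 \<le> g s - r s"
proof -
  obtain t where t: "0 \<le> t" "0 \<le> g t - r t" "t < s"
    using assms(3) unfolding entry_time_def by (auto simp: Inf_less_iff)
  with mono \<open>0 \<le> s\<close> have "g t - r t \<le> g s - r s" by (auto simp: mono_on_def)
  with t show ?thesis by simp
qed

lemma after_entry_time_strict:
  assumes mono: "strict_mono_on {0..} (\<lambda>t. g t - r t)" and "0 \<le> s" "entry_time r g < ereal s"
  shows "0 < g s - r s"
proof -
  obtain c where c: "entry_time r g = ereal c" "0 \<le> c" "c < s"
    using entry_time_nonneg[of r g] assms(3) by (cases "entry_time r g") auto
  define u where "u = (c + s) / 2"
  have u: "c < u" "u < s" "0 \<le> u" using c by (auto simp: u_def)
  have "0 \<le> g u - r u"
    using after_entry_time[OF strict_mono_on_imp_mono_on[OF mono], of u] u c by simp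
  also have "g u - r u < g s - r s" using mono u assms(2) by (auto simp: strict_mono_on_def)
  finally show ?thesis .
qed

text \<open>The entry time is read off from the rationals just to the right of \<open>t\<close>: this is
  where right continuity of the filtration enters.\<close>

lemma entry_time_le_iff_rationals:
  assumes mono: "mono_on {0..} (\<lambda>t. g t - r t)" and "0 \<le> t" "t < u"
  shows "entry_time r g \<le> ereal t \<longleftrightarrow> (\<forall>q\<in>\<rat> \<inter> {t<..<u}. 0 \<le> g q - r q)"
proof
  assume le: "entry_time r g \<le> ereal t"
  show "\<forall>q\<in>\<rat> \<inter> {t<..<u}. 0 \<le> g q - r q"
  proof
    fix q assume "q \<in> \<rat> \<inter> {t<..<u}"
    then have "t < q" by simp
    with le have "entry_time r g < ereal q" by (simp add: le_less_trans)
    with after_entry_time[OF mono] \<open>t < q\<close> assms(2) show "0 \<le> g q - r q" by simp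
  qed
next
  assume rat: "\<forall>q\<in>\<rat> \<inter> {t<..<u}. 0 \<le> g q - r q"
  show "entry_time r g \<le> ereal t"
  proof (rule ccontr)
    assume "\<not> entry_time r g \<le> ereal t"
    then have less: "ereal t < entry_time r g" by simp
    define v where "v = (if entry_time r g = \<infinity> then u else min u (real_of_ereal (entry_time r g)))"
    have v: "t < v" "v \<le> u" "ereal v \<le> entry_time r g"
      using less \<open>t < u\<close> by (cases "entry_time r g"; auto simp: v_def)+
    obtain q where q: "q \<in> \<rat>" "t < q" "q < v" using Rats_dense_in_real[OF v(1)] by blast
    then have "0 \<le> g q - r q" using rat v(2) by auto
    moreover have "ereal q < ereal v" using q(3) by simp
    then have "ereal q < entry_time r g" using v(3) by (rule less_le_trans)
    ultimately show False using before_entry_time[of q r g] q(2) assms(2) by simp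
  qed
qed

lemma AE_lborel_ereal_neq: "AE s in lborel. ereal s \<noteq> (c::ereal)"
  by (cases c) (auto intro: eventually_mono[OF AE_lborel_singleton])

locale stopping_path =
  fixes r g :: "real \<Rightarrow> real"
  assumes measurable_r[measurable]: "r \<in> borel_measurable borel"
    and measurable_g[measurable]: "g \<in> borel_measurable borel"
    and g_nonneg: "\<And>s. 0 \<le> s \<Longrightarrow> 0 \<le> g s"
    and mono: "mono_on {0..} (\<lambda>t. g t - r t)"
    and gain_finite: "\<And>t. 0 \<le> t \<Longrightarrow> (\<integral>\<^sup>+s\<in>{0..t}. gain_rate r s \<partial>lborel) \<noteq> \<infinity>"
    and loss_finite: "\<And>t. 0 \<le> t \<Longrightarrow> (\<integral>\<^sup>+s\<in>{0..t}. loss_rate r g s \<partial>lborel) \<noteq> \<infinity>"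
begin

abbreviation gain :: "real set \<Rightarrow> ennreal" where
  "gain X \<equiv> \<integral>\<^sup>+s\<in>X. gain_rate r s \<partial>lborel"

abbreviation loss :: "real set \<Rightarrow> ennreal" where
  "loss X \<equiv> \<integral>\<^sup>+s\<in>X. loss_rate r g s \<partial>lborel"

abbreviation entry :: ereal where
  "entry \<equiv> entry_time r g"

lemma measurable_gain_rate[measurable]: "gain_rate r \<in> borel_measurable borel"
  unfolding gain_rate_def by measurable

lemma measurable_loss_rate[measurable]: "loss_rate r g \<in> borel_measurable borel"
  unfolding loss_rate_def by measurable

lemma loss_rate_less_gain_rate: "0 \<le> s \<Longrightarrow> ereal s < entry \<Longrightarrow> loss_rate r g s < gain_rate r s"
  using before_entry_time[of s r g] g_nonneg[of s]
  by (simp add: loss_rate_def gain_rate_def ennreal_less_iff)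

lemma gain_rate_le_loss_rate: "0 \<le> s \<Longrightarrow> entry < ereal s \<Longrightarrow> gain_rate r s \<le> loss_rate r g s"
  using after_entry_time[OF mono, of s] g_nonneg[of s]
  by (cases "0 \<le> r s")
     (auto simp: loss_rate_def gain_rate_def ennreal_plus[symmetric] simp del: ennreal_plus
       intro!: ennreal_leI)

lemma gain_rate_less_loss_rate:
  assumes "strict_mono_on {0..} (\<lambda>t. g t - r t)" and "0 \<le> s" "entry < ereal s"
  shows "gain_rate r s < loss_rate r g s"
  using after_entry_time_strict[OF assms] g_nonneg[of s] \<open>0 \<le> s\<close>
  by (cases "0 \<le> r s")
     (auto simp: loss_rate_def gain_rate_def ennreal_plus[symmetric] ennreal_less_iff
       simp del: ennreal_plus)

lemma log_payoff_split:
  assumes "0 \<le> a" "a \<le> b"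
  shows "log_payoff r g b = net_gain (gain (time_upto a) + gain (time_between a b))
                                     (loss (time_upto a) + loss (time_between a b))"
  unfolding log_payoff_def
  using nn_integral_time_upto_split[OF measurable_gain_rate assms]
    nn_integral_time_upto_split[OF measurable_loss_rate assms] by simp

lemma AE_loss_le_gain_before_entry:
  assumes "0 \<le> a"
  shows "AE s in lborel. s \<in> time_between a entry \<longrightarrow> loss_rate r g s \<le> gain_rate r s"
  using AE_lborel_ereal_neq[of entry]
proof eventually_elim
  case (elim s)
  show ?case
  proof
    assume "s \<in> time_between a entry"
    with elim have as: "a < ereal s" and "ereal s < entry" by (auto simp: time_between_def)
    moreover have "0 \<le> s" using ereal_less_imp_pos[OF assms as] by simp
    ultimately show "loss_rate r g s \<le> gain_rate r s"
      using loss_rate_less_gain_rate less_imp_le by blast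
  qed
qed

lemma gain_le_loss_after_entry: "s \<in> time_between entry b \<Longrightarrow> gain_rate r s \<le> loss_rate r g s"
  using ereal_less_imp_pos[OF entry_time_nonneg, of r g s] gain_rate_le_loss_rate[of s]
  by (simp add: time_between_def)

lemma loss_before_entry_le_gain: "0 \<le> a \<Longrightarrow> loss (time_between a entry) \<le> gain (time_between a entry)"
  by (rule nn_integral_mono_AE) (use AE_loss_le_gain_before_entry in \<open>auto simp: indicator_def\<close>)

lemma gain_after_entry_le_loss: "gain (time_between entry b) \<le> loss (time_between entry b)"
  by (rule nn_integral_mono) (simp add: indicator_def gain_le_loss_after_entry)

text \<open>The pathwise form of Condition (C).\<close>

lemma loss_upto_entry_finite:
  assumes C: "entry < \<infinity> \<or> gain {0..} \<noteq> \<infinity>"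
  shows "loss (time_upto entry) \<noteq> \<infinity>"
proof (cases entry)
  case (real c)
  then show ?thesis using loss_finite[of c] entry_time_nonneg[of r g] by (simp add: time_upto_ereal)
next
  case PInf
  have "loss {0..} \<le> gain {0..}"
    using loss_rate_less_gain_rate PInf by (intro nn_integral_mono) (auto simp: indicator_def less_imp_le)
  with C PInf show ?thesis by (auto simp: time_upto_infinity top_unique)
qed (use entry_time_nonneg[of r g] in simp)

theorem log_payoff_le_entry:
  assumes C: "entry < \<infinity> \<or> gain {0..} \<noteq> \<infinity>" and "0 \<le> T"
  shows "log_payoff r g T \<le> log_payoff r g entry"
proof (cases T entry rule: linorder_cases)
  case less
  have "log_payoff r g T \<le> net_gain (gain (time_upto T) + gain (time_between T entry))
                                    (loss (time_upto T) + loss (time_between T entry))"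
    unfolding log_payoff_def
  proof (rule net_gain_le_add)
    show "loss (time_between T entry) \<le> gain (time_between T entry)"
      by (rule loss_before_entry_le_gain[OF \<open>0 \<le> T\<close>])
    show "loss (time_upto T) + loss (time_between T entry) \<noteq> \<infinity>"
      using loss_upto_entry_finite[OF C]
        nn_integral_time_upto_split[OF measurable_loss_rate \<open>0 \<le> T\<close> less_imp_le[OF less]]
      by simp
  qed
  also have "\<dots> = log_payoff r g entry"
    using log_payoff_split[OF \<open>0 \<le> T\<close> less_imp_le[OF less]] by simp
  finally show ?thesis .
next
  case greater
  have "log_payoff r g T = net_gain (gain (time_upto entry) + gain (time_between entry T))
                                     (loss (time_upto entry) + loss (time_between entry T))"
    using log_payoff_split[OF entry_time_nonneg less_imp_le[OF greater]] .
  also have "\<dots> \<le> log_payoff r g entry"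
    unfolding log_payoff_def by (rule net_gain_add_le) (rule gain_after_entry_le_loss)
  finally show ?thesis .
qed simp

theorem log_payoff_before_entry_less:
  assumes C: "entry < \<infinity> \<or> gain {0..} \<noteq> \<infinity>" and "0 \<le> T" and "T < entry"
  shows "log_payoff r g T < log_payoff r g entry"
proof -
  obtain t where t: "T = ereal t" "0 \<le> t" using assms(2,3) by (cases T) auto
  define u where "u = (if entry = \<infinity> then t + 1 else real_of_ereal entry)"
  have tu: "t < u" "ereal u \<le> entry"
    using assms(3) t entry_time_nonneg[of r g] by (cases entry; auto simp: u_def)+
  have split: "loss (time_upto entry) = loss (time_upto T) + loss (time_between T entry)"
    by (rule nn_integral_time_upto_split[OF measurable_loss_rate \<open>0 \<le> T\<close> less_imp_le[OF assms(3)]])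
  have "log_payoff r g T < net_gain (gain (time_upto T) + gain (time_between T entry))
                                    (loss (time_upto T) + loss (time_between T entry))"
    unfolding log_payoff_def
  proof (rule net_gain_less_add)
    show "loss (time_upto T) + loss (time_between T entry) \<noteq> \<infinity>"
      using loss_upto_entry_finite[OF C] split by simp
    show "gain (time_upto T) \<noteq> \<infinity>" using gain_finite t by (simp add: time_upto_ereal)
    show "loss (time_between T entry) < gain (time_between T entry)"
    proof (rule nn_integral_less_on_interval[OF _ _ _ _ AE_loss_le_gain_before_entry tu(1)])
      show "loss (time_between T entry) \<noteq> \<infinity>"
        using loss_upto_entry_finite[OF C] split by simp
      show "{t<..<u} \<subseteq> time_between T entry"
        using t by (auto simp: time_between_def intro!: order.trans[OF _ tu(2)])
      show "loss_rate r g s < gain_rate r s" if "s \<in> {t<..<u}" for s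
        using that t by (intro loss_rate_less_gain_rate) (auto intro!: order.strict_trans2[OF _ tu(2)])
    qed (use \<open>0 \<le> T\<close> in auto)
  qed
  also have "\<dots> = log_payoff r g entry"
    using log_payoff_split[OF \<open>0 \<le> T\<close> less_imp_le[OF assms(3)]] by simp
  finally show ?thesis .
qed

theorem log_payoff_after_entry_less:
  assumes strict: "strict_mono_on {0..} (\<lambda>t. g t - r t)" and "entry < T"
  shows "log_payoff r g T < log_payoff r g entry"
proof -
  obtain c where c: "entry = ereal c" "0 \<le> c"
    using entry_time_nonneg[of r g] assms(2) by (cases entry) auto
  define u where "u = (if T = \<infinity> then c + 1 else real_of_ereal T)"
  have cu: "c < u" "ereal u \<le> T" using assms(2) c by (cases T; auto simp: u_def)+
  have "log_payoff r g T = net_gain (gain (time_upto entry) + gain (time_between entry T))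
                                     (loss (time_upto entry) + loss (time_between entry T))"
    using log_payoff_split[OF entry_time_nonneg less_imp_le[OF assms(2)]] .
  also have "\<dots> < log_payoff r g entry"
    unfolding log_payoff_def
  proof (rule net_gain_add_less)
    show "gain (time_between entry T) \<le> loss (time_between entry T)" by (rule gain_after_entry_le_loss)
    show "loss (time_upto entry) \<noteq> \<infinity>" using loss_finite c by (simp add: time_upto_ereal)
    show "gain (time_upto entry) \<noteq> \<infinity>" using gain_finite c by (simp add: time_upto_ereal)
    assume "loss (time_upto entry) + loss (time_between entry T) \<noteq> \<infinity>"
    then have "loss (time_between entry T) \<noteq> \<infinity>" by simp
    then have fin: "gain (time_between entry T) \<noteq> \<infinity>"
      using gain_after_entry_le_loss[of T] by (auto simp: top_unique)
    show "gain (time_between entry T) < loss (time_between entry T)"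
    proof (rule nn_integral_less_on_interval[OF _ _ _ fin _ cu(1)])
      show "AE s in lborel. s \<in> time_between entry T \<longrightarrow> gain_rate r s \<le> loss_rate r g s"
        by (simp add: gain_le_loss_after_entry)
      show "{c<..<u} \<subseteq> time_between entry T"
        using c by (auto simp: time_between_def intro!: order.trans[OF _ cu(2)])
      show "gain_rate r s < loss_rate r g s" if "s \<in> {c<..<u}" for s
        using that c by (intro gain_rate_less_loss_rate[OF strict]) auto
    qed auto
  qed
  finally show ?thesis .
qed

end

section \<open>The default time as a hitting time\<close>

lemma nn_integral_atLeast0_SUP:
  assumes "f \<in> borel_measurable borel"
  shows "(\<integral>\<^sup>+s\<in>{0..}. f s \<partial>lborel) = (SUP n::nat. \<integral>\<^sup>+s\<in>{0..real n}. f s \<partial>lborel)"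
proof -
  have "(SUP n::nat. \<integral>\<^sup>+s\<in>{0..real n}. f s \<partial>lborel) = emeasure (density lborel f) (\<Union>n::nat. {0..real n})"
    using assms by (subst SUP_emeasure_incseq[symmetric]) (auto simp: emeasure_density incseq_def)
  also have "(\<Union>n::nat. {0..real n}) = {0..}" by (auto intro: real_arch_simple)
  finally show ?thesis using assms by (simp add: emeasure_density)
qed

definition cum_hazard :: "(real \<Rightarrow> real) \<Rightarrow> real \<Rightarrow> real" where
  "cum_hazard g t = (\<integral>s\<in>{0..t}. g s \<partial>lborel)"

locale hazard_path =
  fixes g :: "real \<Rightarrow> real"
  assumes measurable_g[measurable]: "g \<in> borel_measurable borel"
    and g_nonneg: "\<And>s. 0 \<le> s \<Longrightarrow> 0 \<le> g s"
    and g_integrable: "\<And>t. 0 \<le> t \<Longrightarrow> set_integrable lborel {0..t} g"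
begin

lemma nn_integral_eq_cum_hazard:
  assumes "0 \<le> t"
  shows "(\<integral>\<^sup>+s\<in>{0..t}. ennreal (g s) \<partial>lborel) = ennreal (cum_hazard g t)"
proof -
  have "(\<integral>\<^sup>+s\<in>{0..t}. ennreal (g s) \<partial>lborel) = (\<integral>\<^sup>+s. ennreal (indicator {0..t} s *\<^sub>R g s) \<partial>lborel)"
    by (intro nn_integral_cong) (auto simp: indicator_def)
  also have "\<dots> = ennreal (cum_hazard g t)"
    using g_integrable[OF assms] g_nonneg unfolding set_integrable_def
    by (subst nn_integral_eq_integral) (auto simp: indicator_def cum_hazard_def set_lebesgue_integral_def)
  finally show ?thesis .
qed

lemma cum_hazard_nonneg: "0 \<le> cum_hazard g t"
  unfolding cum_hazard_def set_lebesgue_integral_def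
  by (rule integral_nonneg_AE) (auto simp: indicator_def intro: g_nonneg)

lemma cum_hazard_mono:
  assumes "0 \<le> s" "s \<le> t"
  shows "cum_hazard g s \<le> cum_hazard g t"
proof -
  have "(\<integral>\<^sup>+u\<in>{0..s}. ennreal (g u) \<partial>lborel) \<le> (\<integral>\<^sup>+u\<in>{0..t}. ennreal (g u) \<partial>lborel)"
    using assms by (intro nn_integral_mono) (auto simp: indicator_def)
  then show ?thesis using assms cum_hazard_nonneg by (simp add: nn_integral_eq_cum_hazard)
qed

lemma cum_hazard_0: "cum_hazard g 0 = 0"
  unfolding cum_hazard_def set_lebesgue_integral_def
  by (rule integral_eq_zero_AE) (use AE_lborel_singleton[of 0] in \<open>auto elim!: eventually_mono\<close>)

lemma continuous_on_cum_hazard: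
  assumes "0 \<le> b"
  shows "continuous_on {0..b} (cum_hazard g)"
proof (rule continuous_on_eq)
  show "continuous_on {0..b} (\<lambda>x. integral {0..x} g)"
    using set_borel_integral_eq_integral(1)[OF g_integrable[OF assms]]
    by (rule indefinite_integral_continuous_1)
  show "\<And>x. x \<in> {0..b} \<Longrightarrow> integral {0..x} g = cum_hazard g x"
    unfolding cum_hazard_def using set_borel_integral_eq_integral(2)[OF g_integrable] by auto
qed

lemma less_hitting_time_iff:
  fixes e t :: real
  assumes "0 < e" and "0 \<le> t"
  shows "ereal t < Inf {ereal s | s. 0 \<le> s \<and> cum_hazard g s = e} \<longleftrightarrow> cum_hazard g t < e"
    (is "_ < ?\<theta> \<longleftrightarrow> _")
proof
  assume less: "ereal t < ?\<theta>"
  show "cum_hazard g t < e"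
  proof (rule ccontr)
    assume "\<not> cum_hazard g t < e"
    then obtain s where s: "0 \<le> s" "s \<le> t" "cum_hazard g s = e"
      using IVT'[of "cum_hazard g" 0 e t] continuous_on_cum_hazard[OF assms(2)] assms
      by (auto simp: cum_hazard_0)
    then have "?\<theta> \<le> ereal s" by (intro Inf_lower) auto
    also have "\<dots> \<le> ereal t" using s(2) by simp
    finally show False using less by simp
  qed
next
  assume less: "cum_hazard g t < e"
  have "\<forall>x\<in>{0..t+1}. \<forall>\<epsilon>>0. \<exists>\<delta>>0. \<forall>s\<in>{0..t+1}.
      dist s x < \<delta> \<longrightarrow> dist (cum_hazard g s) (cum_hazard g x) < \<epsilon>"
    using continuous_on_cum_hazard[of "t + 1"] assms unfolding continuous_on_iff by simp
  moreover have "t \<in> {0..t+1}" "0 < e - cum_hazard g t" using assms less by auto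
  ultimately obtain d where d: "0 < d"
    "\<And>s. s \<in> {0..t+1} \<Longrightarrow> dist s t < d \<Longrightarrow> dist (cum_hazard g s) (cum_hazard g t) < e - cum_hazard g t"
    by blast
  define \<delta> where "\<delta> = min (d/2) 1"
  have \<delta>: "0 < \<delta>" "\<delta> \<le> 1" "\<delta> < d" using d by (auto simp: \<delta>_def)
  have "ereal (t + \<delta>) \<le> ?\<theta>"
  proof (rule Inf_greatest)
    fix z assume "z \<in> {ereal s | s. 0 \<le> s \<and> cum_hazard g s = e}"
    then obtain s where z: "z = ereal s" and s: "0 \<le> s" "cum_hazard g s = e" by blast
    show "ereal (t + \<delta>) \<le> z"
    proof (rule ccontr)
      assume "\<not> ?thesis"
      then have "s < t + \<delta>" by (simp add: z)
      show False
      proof (cases "s \<le> t")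
        case True
        with cum_hazard_mono[of s t] s less show False by simp
      next
        case False
        with \<open>s < t + \<delta>\<close> \<delta> d(2)[of s] assms(2) s show False by (simp add: dist_real_def)
      qed
    qed
  qed
  then show "ereal t < ?\<theta>" using \<delta>(1) by (rule_tac less_le_trans[of _ "ereal (t + \<delta>)"]) auto
qed

text \<open>The case of equality is excluded because for \<open>T = \<infinity>\<close> the level \<open>e\<close> may or may not
  be attained.\<close>

lemma hitting_time_survival_iff:
  fixes e :: real and T :: ereal
  assumes "0 < e" and "0 \<le> T" and ne: "(\<integral>\<^sup>+s\<in>time_upto T. ennreal (g s) \<partial>lborel) \<noteq> ennreal e"
  defines "\<theta> \<equiv> Inf {ereal t | t. 0 \<le> t \<and> cum_hazard g t = e}"
  shows "(T < \<theta> \<or> \<theta> = \<infinity>) \<longleftrightarrow> (\<integral>\<^sup>+s\<in>time_upto T. ennreal (g s) \<partial>lborel) < ennreal e"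
proof (cases T)
  case (real t)
  with assms(2) have "0 \<le> t" by simp
  then show ?thesis
    using less_hitting_time_iff[OF assms(1) \<open>0 \<le> t\<close>] nn_integral_eq_cum_hazard[OF \<open>0 \<le> t\<close>]
      cum_hazard_nonneg[of t] real
    by (auto simp: \<theta>_def time_upto_ereal ennreal_less_iff)
next
  case PInf
  have "\<theta> = \<infinity> \<longleftrightarrow> (\<forall>t\<ge>0. ereal t < \<theta>)"
  proof (cases \<theta>)
    case (real c)
    then show ?thesis by (auto intro!: exI[of _ "max 0 c"])
  qed auto
  also have "\<dots> \<longleftrightarrow> (\<forall>t\<ge>0. cum_hazard g t < e)"
    using less_hitting_time_iff[OF assms(1)] by (simp add: \<theta>_def)
  also have "\<dots> \<longleftrightarrow> (\<integral>\<^sup>+s\<in>{0..}. ennreal (g s) \<partial>lborel) < ennreal e"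
  proof
    assume less: "\<forall>t\<ge>0. cum_hazard g t < e"
    have "(\<integral>\<^sup>+s\<in>{0..}. ennreal (g s) \<partial>lborel) = (SUP n::nat. ennreal (cum_hazard g (real n)))"
      by (simp add: nn_integral_atLeast0_SUP nn_integral_eq_cum_hazard)
    also have "\<dots> \<le> ennreal e"
      using less by (intro SUP_least ennreal_leI) (simp add: less_imp_le)
    finally show "(\<integral>\<^sup>+s\<in>{0..}. ennreal (g s) \<partial>lborel) < ennreal e"
      using ne PInf by (simp add: time_upto_infinity)
  next
    assume less: "(\<integral>\<^sup>+s\<in>{0..}. ennreal (g s) \<partial>lborel) < ennreal e"
    show "\<forall>t\<ge>0. cum_hazard g t < e"
    proof (intro allI impI)
      fix t :: real assume "0 \<le> t"
      have "ennreal (cum_hazard g t) \<le> (\<integral>\<^sup>+s\<in>{0..}. ennreal (g s) \<partial>lborel)"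
        using \<open>0 \<le> t\<close> by (subst nn_integral_eq_cum_hazard[symmetric])
          (auto intro!: nn_integral_mono simp: indicator_def)
      with less show "cum_hazard g t < e"
        using cum_hazard_nonneg[of t] by (simp add: ennreal_less_iff[symmetric] del: ennreal_less_iff)
    qed
  qed
  finally show ?thesis using PInf by (simp add: time_upto_infinity)
qed (use assms(2) in simp)

end

section \<open>Filtrations, independence and the exponential law\<close>

lemma progressive_measurable_section:
  assumes "progressive G X" and "0 \<le> t"
  shows "X t \<in> borel_measurable (G t)"
proof -
  have Pair_t: "Pair t \<in> measurable (G t) (restrict_space lborel {0..t} \<Otimes>\<^sub>M G t)"
    using assms(2) by (intro measurable_Pair1') (simp add: space_restrict_space)
  have "(\<lambda>(s, x). X s x) \<in> borel_measurable (restrict_space lborel {0..t} \<Otimes>\<^sub>M G t)"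
    using assms unfolding progressive_def by simp
  from measurable_comp[OF Pair_t this] show ?thesis by (simp add: comp_def)
qed

definition Ginf_measure :: "'a measure \<Rightarrow> (real \<Rightarrow> 'a measure) \<Rightarrow> 'a measure" where
  "Ginf_measure M G = sigma (space M) (\<Union>t\<in>{0..}. sets (G t))"

context
  fixes M :: "'a measure" and G :: "real \<Rightarrow> 'a measure"
  assumes filtration: "right_cont_filtration M G"
begin

lemma space_filtration: "space (G t) = space M"
  using filtration unfolding right_cont_filtration_def by blast

lemma sets_filtration_subset: "sets (G t) \<subseteq> sets M"
  using filtration unfolding right_cont_filtration_def by blast

lemma sets_filtration_mono: "0 \<le> s \<Longrightarrow> s \<le> t \<Longrightarrow> sets (G s) \<subseteq> sets (G t)"
  using filtration unfolding right_cont_filtration_def by blast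

lemma sets_filtration_right_cont: "0 \<le> t \<Longrightarrow> sets (G t) = (\<Inter>s\<in>{t<..}. sets (G s))"
  using filtration unfolding right_cont_filtration_def by blast

lemma space_Ginf_measure[simp]: "space (Ginf_measure M G) = space M"
  unfolding Ginf_measure_def by (simp add: space_measure_of_conv)

lemma sets_Ginf_measure: "sets (Ginf_measure M G) = Ginf M G"
proof -
  have "(\<Union>t\<in>{0..}. sets (G t)) \<subseteq> Pow (space M)"
  proof (intro subsetI, elim UN_E)
    fix A t assume "A \<in> sets (G t)"
    then have "A \<subseteq> space (G t)" by (rule sets.sets_into_space)
    then show "A \<in> Pow (space M)" using space_filtration by simp
  qed
  then show ?thesis unfolding Ginf_measure_def Ginf_def by (simp add: sets_measure_of)
qed

lemma subalgebra_Ginf_measure: "subalgebra M (Ginf_measure M G)"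
proof -
  have "(\<Union>t\<in>{0..}. sets (G t)) \<subseteq> sets M"
    using sets_filtration_subset by blast
  then show ?thesis
    unfolding subalgebra_def sets_Ginf_measure Ginf_def by (simp add: sets.sigma_sets_subset)
qed

lemma sets_filtration_subset_Ginf: "0 \<le> t \<Longrightarrow> sets (G t) \<subseteq> sets (Ginf_measure M G)"
  unfolding sets_Ginf_measure Ginf_def by (auto intro: sigma_sets.Basic)

lemma measurable_Ginf_measure_filtration:
  assumes "0 \<le> t"
  shows "(\<lambda>x. x) \<in> measurable (Ginf_measure M G) (G t)"
proof (rule measurableI)
  fix A assume A: "A \<in> sets (G t)"
  then have "(\<lambda>x. x) -` A \<inter> space (Ginf_measure M G) = A"
    using sets.sets_into_space[OF A] by (auto simp: space_filtration)
  then show "(\<lambda>x. x) -` A \<inter> space (Ginf_measure M G) \<in> sets (Ginf_measure M G)"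
    using sets_filtration_subset_Ginf[OF assms] A by auto
qed (simp add: space_filtration)

text \<open>A progressive process, cut off at negative times, is jointly measurable for \<open>\<G>\<^sub>\<infinity>\<close>:
  it is the pointwise limit of the processes frozen at the times \<open>n\<close>.\<close>

lemma progressive_measurable_Ginf:
  assumes prog: "progressive G X"
  shows "(\<lambda>(x, s). indicator {0..} s * X s x) \<in> borel_measurable (Ginf_measure M G \<Otimes>\<^sub>M lborel)"
proof (rule borel_measurable_LIMSEQ_real)
  define clip where "clip n s = max 0 (min (real n) s)" for n :: nat and s :: real
  define X_upto where "X_upto n z = (if snd z \<in> {0..real n} then X (clip n (snd z)) (fst z) else 0)" for n z
  show "X_upto n \<in> borel_measurable (Ginf_measure M G \<Otimes>\<^sub>M lborel)" for n
  proof -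
    have "(\<lambda>z. clip n (snd z)) \<in> measurable (Ginf_measure M G \<Otimes>\<^sub>M lborel) (restrict_space lborel {0..real n})"
      by (rule measurable_restrict_space2) (auto simp: clip_def)
    moreover have "fst \<in> measurable (Ginf_measure M G \<Otimes>\<^sub>M lborel) (G (real n))"
      using measurable_fst measurable_Ginf_measure_filtration[of "real n"]
      by (rule measurable_comp[unfolded comp_def]) simp
    ultimately have frozen: "(\<lambda>z. (clip n (snd z), fst z))
        \<in> measurable (Ginf_measure M G \<Otimes>\<^sub>M lborel) (restrict_space lborel {0..real n} \<Otimes>\<^sub>M G (real n))"
      by (rule measurable_Pair)
    have "(\<lambda>(s, x). X s x) \<in> borel_measurable (restrict_space lborel {0..real n} \<Otimes>\<^sub>M G (real n))"
      using prog unfolding progressive_def by simp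
    from measurable_comp[OF frozen this]
    have "(\<lambda>z. X (clip n (snd z)) (fst z)) \<in> borel_measurable (Ginf_measure M G \<Otimes>\<^sub>M lborel)"
      by (simp add: comp_def)
    then show ?thesis unfolding X_upto_def by measurable
  qed
  fix z :: "'a \<times> real"
  have "eventually (\<lambda>n. X_upto n z = (case z of (x, s) \<Rightarrow> indicator {0..} s * X s x)) sequentially"
    unfolding eventually_sequentially
  proof (intro exI allI impI)
    fix n assume "nat \<lceil>snd z\<rceil> \<le> n"
    then have "snd z \<le> real n" by linarith
    then show "X_upto n z = (case z of (x, s) \<Rightarrow> indicator {0..} s * X s x)"
      by (auto simp: X_upto_def clip_def indicator_def split: prod.split)
  qed
  then show "(\<lambda>n. X_upto n z) \<longlonglongrightarrow> (case z of (x, s) \<Rightarrow> indicator {0..} s * X s x)"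
    by (rule tendsto_eventually)
qed

lemma measurable_stopping_time_Ginf:
  assumes S: "stopping_time_inf M G S"
  shows "S \<in> borel_measurable (Ginf_measure M G)"
  unfolding borel_measurable_iff_Iic_ereal
proof
  fix a :: ereal
  have S_nonneg: "x \<in> space M \<Longrightarrow> 0 \<le> S x" for x
    using S by (simp add: stopping_time_inf_def)
  consider t where "a = ereal t" "0 \<le> t" | "a = \<infinity>" | "a < 0"
    by (cases a) (force simp: not_le)+
  then show "S -` {..a} \<inter> space (Ginf_measure M G) \<in> sets (Ginf_measure M G)"
  proof cases
    case 1
    then have "S -` {..a} \<inter> space (Ginf_measure M G) = {x\<in>space M. S x \<le> ereal t}" by auto
    with S 1 sets_filtration_subset_Ginf[of t] show ?thesis by (auto simp: stopping_time_inf_def)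
  next
    case 2
    then show ?thesis using sets.top[of "Ginf_measure M G"] by (simp add: vimage_def)
  next
    case 3
    have "\<not> S x \<le> a" if "x \<in> space M" for x
      using order.strict_trans2[OF 3 S_nonneg[OF that]] by (simp add: not_le)
    then have "S -` {..a} \<inter> space (Ginf_measure M G) = {}" by auto
    then show ?thesis by simp
  qed
qed

end

context prob_space
begin

lemma distr_indep_subalgebra_eq_pair_measure:
  assumes sub: "subalgebra M N" and [measurable]: "E \<in> borel_measurable M"
    and indep: "indep_set {E -` B \<inter> space M | B. B \<in> sets borel} (sets N)"
  shows "distr M borel E \<Otimes>\<^sub>M distr M N (\<lambda>x. x) = distr M (borel \<Otimes>\<^sub>M N) (\<lambda>x. (E x, x))"
proof (rule pair_measure_eqI)
  let ?law = "distr M borel E" and ?N = "distr M N (\<lambda>x. x)"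
  have id_M_N: "(\<lambda>x. x) \<in> measurable M N"
    by (rule measurable_from_subalg[OF sub measurable_id])
  then have pair: "(\<lambda>x. (E x, x)) \<in> measurable M (borel \<Otimes>\<^sub>M N)" by measurable
  show "sigma_finite_measure ?law"
    by (intro prob_space_imp_sigma_finite prob_space_distr) simp
  show "sigma_finite_measure ?N"
    by (intro prob_space_imp_sigma_finite prob_space_distr id_M_N)
  fix A B assume "A \<in> sets ?law" "B \<in> sets ?N"
  then have A: "A \<in> sets borel" and B: "B \<in> sets N" by auto
  have B_space: "B \<subseteq> space M"
    using sets.sets_into_space[OF B] sub by (auto simp: subalgebra_def)
  have "emeasure ?law A = prob (E -` A \<inter> space M)"
    using A by (simp add: emeasure_distr emeasure_eq_measure)
  moreover have "emeasure ?N B = prob B"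
  proof -
    have "emeasure ?N B = emeasure M ((\<lambda>x. x) -` B \<inter> space M)"
      using B by (intro emeasure_distr id_M_N)
    also have "(\<lambda>x. x) -` B \<inter> space M = B" using B_space by auto
    finally show ?thesis by (simp add: emeasure_eq_measure)
  qed
  moreover have "emeasure (distr M (borel \<Otimes>\<^sub>M N) (\<lambda>x. (E x, x))) (A \<times> B)
      = prob ((E -` A \<inter> space M) \<inter> B)"
  proof -
    have "emeasure (distr M (borel \<Otimes>\<^sub>M N) (\<lambda>x. (E x, x))) (A \<times> B)
        = emeasure M ((\<lambda>x. (E x, x)) -` (A \<times> B) \<inter> space M)"
      using A B by (intro emeasure_distr pair) auto
    also have "(\<lambda>x. (E x, x)) -` (A \<times> B) \<inter> space M = (E -` A \<inter> space M) \<inter> B"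
      using B_space by auto
    finally show ?thesis by (simp add: emeasure_eq_measure)
  qed
  moreover have "prob ((E -` A \<inter> space M) \<inter> B) = prob (E -` A \<inter> space M) * prob B"
    by (rule indep_setD[OF indep]) (use A B in auto)
  ultimately show "emeasure ?law A * emeasure ?N B
      = emeasure (distr M (borel \<Otimes>\<^sub>M N) (\<lambda>x. (E x, x))) (A \<times> B)"
    by (simp add: ennreal_mult[symmetric])
qed simp

lemma nn_integral_indep_subalgebra:
  assumes sub: "subalgebra M N" and [measurable]: "E \<in> borel_measurable M"
    and indep: "indep_set {E -` B \<inter> space M | B. B \<in> sets borel} (sets N)"
    and [measurable]: "F \<in> borel_measurable (borel \<Otimes>\<^sub>M N)"
  shows "(\<integral>\<^sup>+x. F (E x, x) \<partial>M) = (\<integral>\<^sup>+x. (\<integral>\<^sup>+e. F (e, x) \<partial>distr M borel E) \<partial>M)"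
proof -
  let ?law = "distr M borel E" and ?N = "distr M N (\<lambda>x. x)"
  have id_M_N: "(\<lambda>x. x) \<in> measurable M N"
    by (rule measurable_from_subalg[OF sub measurable_id])
  then have pair: "(\<lambda>x. (E x, x)) \<in> measurable M (borel \<Otimes>\<^sub>M N)" by measurable
  interpret pf: pair_sigma_finite ?law ?N
    unfolding pair_sigma_finite_def using id_M_N
    by (intro conjI prob_space_imp_sigma_finite prob_space_distr) simp_all
  have "(\<integral>\<^sup>+x. F (E x, x) \<partial>M) = integral\<^sup>N (distr M (borel \<Otimes>\<^sub>M N) (\<lambda>x. (E x, x))) F"
    by (rule nn_integral_distr[symmetric, OF pair]) simp
  also have "\<dots> = (\<integral>\<^sup>+y. (\<integral>\<^sup>+e. F (e, y) \<partial>?law) \<partial>?N)"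
  proof -
    have "F \<in> borel_measurable (?law \<Otimes>\<^sub>M ?N)" by measurable
    moreover have "?law \<Otimes>\<^sub>M ?N = distr M (borel \<Otimes>\<^sub>M N) (\<lambda>x. (E x, x))"
      by (rule distr_indep_subalgebra_eq_pair_measure[OF sub _ indep]) simp
    ultimately show ?thesis using pf.nn_integral_snd[of F] by simp
  qed
  also have "\<dots> = (\<integral>\<^sup>+x. (\<integral>\<^sup>+e. F (e, x) \<partial>?law) \<partial>M)"
  proof (rule nn_integral_distr[OF id_M_N])
    have "(\<lambda>(y, e). F (e, y)) \<in> borel_measurable (?N \<Otimes>\<^sub>M ?law)" by measurable
    then show "(\<lambda>y. \<integral>\<^sup>+ e. F (e, y) \<partial>?law) \<in> borel_measurable ?N"
      using pf.M1.borel_measurable_nn_integral[of "\<lambda>y e. F (e, y)"] by simp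
  qed
  finally show ?thesis .
qed

context
  fixes E :: "'a \<Rightarrow> real"
  assumes exponential: "distributed M lborel E (exponential_density 1)"
begin

lemma measurable_exponential[measurable]: "E \<in> borel_measurable M"
  using distributed_measurable[OF exponential] by simp

lemma emeasure_exponential_nonpos: "emeasure M {x\<in>space M. E x \<le> 0} = 0"
  using exponential_distributedD_le[OF exponential order.refl] by (simp add: emeasure_eq_measure)

lemma AE_exponential_pos: "AE x in M. 0 < E x"
proof (rule AE_I')
  show "{x\<in>space M. E x \<le> 0} \<in> null_sets M"
    using emeasure_exponential_nonpos by (auto intro: null_setsI)
qed auto

lemma emeasure_exponential_gt: "emeasure (distr M borel E) {e. a < ennreal e} = exp_survival a"
proof (cases a rule: ennreal_cases)
  case (real b)
  then have "{e. a < ennreal e} = {b<..}" by (auto simp: ennreal_less_iff)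
  moreover have "E -` {b<..} \<inter> space M = {x\<in>space M. b < E x}" by auto
  ultimately show ?thesis
    using exponential_distributedD_gt[OF exponential real(1)] real
    by (simp add: emeasure_distr emeasure_eq_measure exp_survival_def)
qed (simp add: exp_survival_def)

lemma emeasure_exponential_eq: "emeasure (distr M borel E) {e. ennreal e = a} = 0"
proof -
  let ?law = "distr M borel E"
  have "emeasure ?law {c} = 0" for c
    using distributed_emeasure[OF exponential, of "{c}"]
    by (simp add: emeasure_distr nn_integral_null_set)
  moreover have "emeasure ?law {..0} = 0"
    using emeasure_exponential_nonpos by (simp add: emeasure_distr vimage_def Int_def conj_commute)
  moreover have "{e. ennreal e = a} \<subseteq> {..0} \<union> {enn2real a}"
  proof
    fix e assume "e \<in> {e. ennreal e = a}"
    then show "e \<in> {..0} \<union> {enn2real a}" by (cases "e \<le> 0") auto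
  qed
  then have "emeasure ?law {e. ennreal e = a} \<le> emeasure ?law {..0} + emeasure ?law {enn2real a}"
    by (intro order.trans[OF emeasure_mono emeasure_subadditive]) auto
  ultimately show ?thesis by simp
qed

end

end

section \<open>The optimal stopping problem\<close>

text \<open>Before time \<open>0\<close> the processes are cut off to zero, so that their paths are Borel
  functions on the whole real line.\<close>

definition sample_path :: "(real \<Rightarrow> 'a \<Rightarrow> real) \<Rightarrow> 'a \<Rightarrow> real \<Rightarrow> real" where
  "sample_path X x s = indicator {0..} s * X s x"

lemma entry_time_sample_path:
  "entry_time (sample_path r x) (sample_path \<gamma> x) = entry_time (\<lambda>t. r t x) (\<lambda>t. \<gamma> t x)"
  unfolding entry_time_def sample_path_def by (rule arg_cong[where f=Inf]) auto

locale stopping_problem = prob_space M for M :: "'a measure" +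
  fixes G :: "real \<Rightarrow> 'a measure" and E :: "'a \<Rightarrow> real" and r \<gamma> :: "real \<Rightarrow> 'a \<Rightarrow> real"
  assumes filtration: "right_cont_filtration M G"
    and exponential: "distributed M lborel E (exponential_density 1)"
    and indep: "indep_set {E -` B \<inter> space M | B. B \<in> sets borel} (Ginf M G)"
    and progressive_r: "progressive G r" and integrable_r: "loc_int_pathwise M r"
    and progressive_\<gamma>: "progressive G \<gamma>" and integrable_\<gamma>: "loc_int_pathwise M \<gamma>"
    and \<gamma>_nonneg: "\<forall>x\<in>space M. \<forall>t\<ge>0. 0 \<le> \<gamma> t x"
    and mono: "\<forall>x\<in>space M. mono_on {0..} (\<lambda>t. \<gamma> t x - r t x)"
begin

abbreviation N :: "'a measure" where
  "N \<equiv> Ginf_measure M G"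

abbreviation \<tau> :: "'a \<Rightarrow> ereal" where
  "\<tau> x \<equiv> entry_time (\<lambda>t. r t x) (\<lambda>t. \<gamma> t x)"

abbreviation W :: "'a \<Rightarrow> ereal \<Rightarrow> ereal" where
  "W x T \<equiv> log_payoff (sample_path r x) (sample_path \<gamma> x) T"

lemma measurable_sample_path_r[measurable]:
  "(\<lambda>z. sample_path r (fst z) (snd z)) \<in> borel_measurable (N \<Otimes>\<^sub>M lborel)"
  using progressive_measurable_Ginf[OF filtration progressive_r]
  by (simp add: sample_path_def case_prod_beta')

lemma measurable_sample_path_\<gamma>[measurable]:
  "(\<lambda>z. sample_path \<gamma> (fst z) (snd z)) \<in> borel_measurable (N \<Otimes>\<^sub>M lborel)"
  using progressive_measurable_Ginf[OF filtration progressive_\<gamma>]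
  by (simp add: sample_path_def case_prod_beta')

lemma borel_measurable_sample_path[measurable]:
  assumes "x \<in> space M"
  shows "sample_path r x \<in> borel_measurable borel" "sample_path \<gamma> x \<in> borel_measurable borel"
  using measurable_Pair2[OF measurable_sample_path_r, of x]
    measurable_Pair2[OF measurable_sample_path_\<gamma>, of x]
    assms by (simp_all add: space_Ginf_measure[OF filtration])

lemma set_integrable_sample_path:
  assumes "x \<in> space M" and "0 \<le> t"
  shows "set_integrable lborel {0..t} (sample_path r x)" "set_integrable lborel {0..t} (sample_path \<gamma> x)"
proof -
  have "set_integrable lborel {0..t} (sample_path X x) \<longleftrightarrow> set_integrable lborel {0..t} (\<lambda>s. X s x)" for X
    by (rule set_integrable_cong) (auto simp: sample_path_def)
  then show "set_integrable lborel {0..t} (sample_path r x)" "set_integrable lborel {0..t} (sample_path \<gamma> x)"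
    using assms integrable_r integrable_\<gamma> unfolding loc_int_pathwise_def by auto
qed

lemma sample_path_\<gamma>_nonneg: "x \<in> space M \<Longrightarrow> 0 \<le> sample_path \<gamma> x s"
  using \<gamma>_nonneg by (auto simp: sample_path_def indicator_def)

lemma set_nn_integral_loss_rate:
  assumes "x \<in> space M" and [measurable]: "A \<in> sets borel"
  shows "(\<integral>\<^sup>+s\<in>A. loss_rate (sample_path r x) (sample_path \<gamma> x) s \<partial>lborel)
    = (\<integral>\<^sup>+s\<in>A. ennreal (max 0 (- sample_path r x s)) \<partial>lborel) + (\<integral>\<^sup>+s\<in>A. ennreal (sample_path \<gamma> x s) \<partial>lborel)"
  unfolding loss_rate_def using assms by (intro set_nn_integral_add) measurable

lemma stopping_path_sample_path:
  assumes x: "x \<in> space M"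
  shows "stopping_path (sample_path r x) (sample_path \<gamma> x)"
proof
  show "mono_on {0..} (\<lambda>t. sample_path \<gamma> x t - sample_path r x t)"
    using mono x by (auto simp: mono_on_def sample_path_def)
  fix t :: real assume t: "0 \<le> t"
  show "(\<integral>\<^sup>+s\<in>{0..t}. gain_rate (sample_path r x) s \<partial>lborel) \<noteq> \<infinity>"
    using set_integrable_sample_path[OF x t]
    by (intro set_nn_integral_finite_if_set_integrable) (auto simp: gain_rate_def intro!: ennreal_leI)
  have "(\<integral>\<^sup>+s\<in>{0..t}. ennreal (max 0 (- sample_path r x s)) \<partial>lborel) \<noteq> \<infinity>"
    by (rule set_nn_integral_finite_if_set_integrable[OF set_integrable_sample_path(1)[OF x t]])
       (auto intro!: ennreal_leI)
  moreover have "(\<integral>\<^sup>+s\<in>{0..t}. ennreal (sample_path \<gamma> x s) \<partial>lborel) \<noteq> \<infinity>"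
    by (rule set_nn_integral_finite_if_set_integrable[OF set_integrable_sample_path(2)[OF x t]])
       (auto intro!: ennreal_leI)
  ultimately show "(\<integral>\<^sup>+s\<in>{0..t}. loss_rate (sample_path r x) (sample_path \<gamma> x) s \<partial>lborel) \<noteq> \<infinity>"
    using set_nn_integral_loss_rate[OF x] by simp
qed (use x sample_path_\<gamma>_nonneg in auto)

lemma hazard_path_sample_path: "x \<in> space M \<Longrightarrow> hazard_path (sample_path \<gamma> x)"
  using set_integrable_sample_path sample_path_\<gamma>_nonneg by unfold_locales auto

lemma default_time_eq_hitting_time:
  "default_time \<gamma> E x = Inf {ereal t | t. 0 \<le> t \<and> cum_hazard (sample_path \<gamma> x) t = E x}"
proof -
  have "(\<integral>s\<in>{0..t}. \<gamma> s x \<partial>lborel) = cum_hazard (sample_path \<gamma> x) t" for t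
    unfolding cum_hazard_def by (rule set_lebesgue_integral_cong) (auto simp: sample_path_def)
  then show ?thesis unfolding default_time_def by simp
qed

lemma cum_int_eq_cum_diff:
  assumes x: "x \<in> space M" and "0 \<le> T"
  shows "cum_int r x T = cum_diff (\<integral>\<^sup>+s\<in>time_upto T. gain_rate (sample_path r x) s \<partial>lborel)
                                  (\<integral>\<^sup>+s\<in>time_upto T. ennreal (max 0 (- sample_path r x s)) \<partial>lborel)"
proof (cases T)
  case PInf
  have "(\<integral>\<^sup>+s\<in>{0..}. ennreal (max 0 (r s x)) \<partial>lborel)
      = (\<integral>\<^sup>+s\<in>time_upto T. gain_rate (sample_path r x) s \<partial>lborel)"
    "(\<integral>\<^sup>+s\<in>{0..}. ennreal (max 0 (- r s x)) \<partial>lborel)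
      = (\<integral>\<^sup>+s\<in>time_upto T. ennreal (max 0 (- sample_path r x s)) \<partial>lborel)"
    unfolding PInf time_upto_infinity gain_rate_def
    by (auto intro!: nn_integral_cong simp: sample_path_def indicator_def)
  then show ?thesis using PInf by (simp add: cum_int_def cum_diff_def Let_def)
next
  case (real t)
  with assms(2) have t: "0 \<le> t" by simp
  let ?P = "\<integral>\<^sup>+s\<in>{0..t}. ennreal (max 0 (sample_path r x s)) \<partial>lborel"
  and ?N = "\<integral>\<^sup>+s\<in>{0..t}. ennreal (max 0 (- sample_path r x s)) \<partial>lborel"
  have "(\<integral>s\<in>{0..t}. r s x \<partial>lborel) = (\<integral>s\<in>{0..t}. sample_path r x s \<partial>lborel)"
    by (rule set_lebesgue_integral_cong) (auto simp: sample_path_def)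
  also have "\<dots> = enn2real ?P - enn2real ?N"
    using set_integrable_sample_path(1)[OF x t] by (rule set_lebesgue_integral_eq_pos_minus_neg)
  finally have eq: "(\<integral>s\<in>{0..t}. r s x \<partial>lborel) = enn2real ?P - enn2real ?N" .
  have "?P \<noteq> \<infinity>"
    by (rule set_nn_integral_finite_if_set_integrable[OF set_integrable_sample_path(1)[OF x t]])
       (auto intro!: ennreal_leI)
  moreover have "?N \<noteq> \<infinity>"
    by (rule set_nn_integral_finite_if_set_integrable[OF set_integrable_sample_path(1)[OF x t]])
       (auto intro!: ennreal_leI)
  ultimately show ?thesis using real eq
    by (cases ?P rule: ennreal_cases; cases ?N rule: ennreal_cases)
       (auto simp: cum_int_def cum_diff_def time_upto_ereal gain_rate_def)
qed (use assms(2) in simp)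

lemma measurable_exp_log_payoff:
  assumes "S \<in> borel_measurable N"
  shows "(\<lambda>x. exp_ext (W x (S x))) \<in> borel_measurable M"
proof -
  note [measurable] = measurable_set_nn_integral_time_upto[OF assms]
  have "(\<lambda>x. exp_ext (W x (S x))) \<in> borel_measurable N"
    unfolding log_payoff_def gain_rate_def loss_rate_def by measurable
  then show ?thesis by (rule measurable_from_subalg[OF subalgebra_Ginf_measure[OF filtration]])
qed

lemma entry_time_stopping_time: "stopping_time_inf M G \<tau>"
  unfolding stopping_time_inf_def
proof (intro conjI ballI allI impI)
  fix x show "0 \<le> \<tau> x" by (rule entry_time_nonneg)
next
  fix t :: real assume t: "0 \<le> t"
  have "{x\<in>space M. \<tau> x \<le> ereal t} \<in> sets (G u)" if tu: "t < u" for u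
  proof -
    define Q where "Q = \<rat> \<inter> {t<..<u}"
    have "countable Q" unfolding Q_def by (intro countable_Int1 countable_rat)
    obtain q0 where "q0 \<in> \<rat>" "t < q0" "q0 < u" using Rats_dense_in_real[OF tu] by blast
    then have "Q \<noteq> {}" unfolding Q_def by auto
    have "\<tau> x \<le> ereal t \<longleftrightarrow> (\<forall>q\<in>Q. 0 \<le> \<gamma> q x - r q x)" if "x \<in> space M" for x
      unfolding Q_def using entry_time_le_iff_rationals[OF _ t tu] mono that by simp
    with \<open>Q \<noteq> {}\<close> have eq: "{x\<in>space M. \<tau> x \<le> ereal t} = (\<Inter>q\<in>Q. {x\<in>space M. 0 \<le> \<gamma> q x - r q x})"
      by auto
    have "(\<lambda>q. {x\<in>space M. 0 \<le> \<gamma> q x - r q x}) ` Q \<subseteq> sets (G u)"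
    proof (rule image_subsetI)
      fix q assume "q \<in> Q"
      with t have q: "0 \<le> q" "q \<le> u" unfolding Q_def by auto
      note [measurable] = progressive_measurable_section[OF progressive_\<gamma> q(1)]
        progressive_measurable_section[OF progressive_r q(1)]
      have "{x\<in>space (G q). 0 \<le> \<gamma> q x - r q x} \<in> sets (G q)" by measurable
      then show "{x\<in>space M. 0 \<le> \<gamma> q x - r q x} \<in> sets (G u)"
        using sets_filtration_mono[OF filtration q] by (auto simp: space_filtration[OF filtration])
    qed
    then show ?thesis
      unfolding eq by (intro sets.countable_INT' \<open>countable Q\<close> \<open>Q \<noteq> {}\<close>)
  qed
  then show "{x\<in>space M. \<tau> x \<le> ereal t} \<in> sets (G t)"
    unfolding sets_filtration_right_cont[OF filtration t] by blast
qed

lemma nn_integral_indep_exponential: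
  assumes "F \<in> borel_measurable (borel \<Otimes>\<^sub>M N)"
  shows "(\<integral>\<^sup>+x. F (E x, x) \<partial>M) = (\<integral>\<^sup>+x. (\<integral>\<^sup>+e. F (e, x) \<partial>distr M borel E) \<partial>M)"
  using subalgebra_Ginf_measure[OF filtration] measurable_exponential[OF exponential] indep assms
  by (intro nn_integral_indep_subalgebra) (simp_all add: sets_Ginf_measure[OF filtration])

lemma AE_hazard_neq_exponential:
  assumes [measurable]: "H \<in> borel_measurable N"
  shows "AE x in M. H x \<noteq> ennreal (E x)"
proof (rule AE_I')
  note [measurable] = measurable_exponential[OF exponential]
  have H_M[measurable]: "H \<in> borel_measurable M"
    by (rule measurable_from_subalg[OF subalgebra_Ginf_measure[OF filtration] assms])
  let ?A = "{x\<in>space M. H x = ennreal (E x)}"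
  have "?A \<in> sets M" by measurable
  then have "emeasure M ?A = (\<integral>\<^sup>+x. indicator ?A x \<partial>M)" by simp
  also have "\<dots> = (\<integral>\<^sup>+x. (if H x = ennreal (E x) then 1 else 0) \<partial>M)"
    by (intro nn_integral_cong) (auto simp: indicator_def)
  also have "\<dots> = (\<integral>\<^sup>+x. emeasure (distr M borel E) {e. ennreal e = H x} \<partial>M)"
  proof -
    have "(\<lambda>z. if H (snd z) = ennreal (fst z) then 1 else 0 :: ennreal) \<in> borel_measurable (borel \<Otimes>\<^sub>M N)"
      by measurable
    from nn_integral_indep_exponential[OF this]
    have "(\<integral>\<^sup>+x. (if H x = ennreal (E x) then 1 else 0) \<partial>M)
        = (\<integral>\<^sup>+x. (\<integral>\<^sup>+e. indicator {e. ennreal e = H x} e \<partial>distr M borel E) \<partial>M)"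
      by (simp add: indicator_def of_bool_def eq_commute)
    moreover have "{e. ennreal e = H x} \<in> sets borel" for x by (rule pred_Collect_borel) measurable
    ultimately show ?thesis by simp
  qed
  also have "\<dots> = 0" by (simp add: emeasure_exponential_eq[OF exponential])
  finally show "?A \<in> null_sets M" using \<open>?A \<in> sets M\<close> by (auto intro: null_setsI)
qed auto

text \<open>Given \<open>\<G>\<^sub>\<infinity>\<close>, default comes after \<open>S\<close> with probability \<open>exp (-\<integral>\<^sub>0\<^sup>S \<gamma>)\<close> because \<open>E\<close> is
  an independent standard exponential variable.\<close>

lemma payoff_eq_log_payoff:
  assumes S: "stopping_time_inf M G S"
  shows "payoff M r (default_time \<gamma> E) S = (\<integral>\<^sup>+x. exp_ext (W x (S x)) \<partial>M)"
proof -
  let ?law = "distr M borel E"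
  have S_N[measurable]: "S \<in> borel_measurable N" by (rule measurable_stopping_time_Ginf[OF filtration S])
  have S_nonneg: "x \<in> space M \<Longrightarrow> 0 \<le> S x" for x using S by (simp add: stopping_time_inf_def)
  define gain where "gain x = (\<integral>\<^sup>+s\<in>time_upto (S x). gain_rate (sample_path r x) s \<partial>lborel)" for x
  define neg where "neg x = (\<integral>\<^sup>+s\<in>time_upto (S x). ennreal (max 0 (- sample_path r x s)) \<partial>lborel)" for x
  define hazard where "hazard x = (\<integral>\<^sup>+s\<in>time_upto (S x). ennreal (sample_path \<gamma> x s) \<partial>lborel)" for x
  have [measurable]: "gain \<in> borel_measurable N"
    unfolding gain_def gain_rate_def by (rule measurable_set_nn_integral_time_upto[OF S_N]) measurable
  have [measurable]: "neg \<in> borel_measurable N"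
    unfolding neg_def by (rule measurable_set_nn_integral_time_upto[OF S_N]) measurable
  have hazard_N[measurable]: "hazard \<in> borel_measurable N"
    unfolding hazard_def by (rule measurable_set_nn_integral_time_upto[OF S_N]) measurable
  define F where "F z = (if hazard (snd z) < ennreal (fst z)
    then exp_ext (cum_diff (gain (snd z)) (neg (snd z))) else 0)"
    for z :: "real \<times> 'a"
  have F[measurable]: "F \<in> borel_measurable (borel \<Otimes>\<^sub>M N)" unfolding F_def by measurable
  have "payoff M r (default_time \<gamma> E) S = (\<integral>\<^sup>+x. F (E x, x) \<partial>M)"
    unfolding payoff_def
  proof (rule nn_integral_cong_AE)
    show "AE x in M. exp_ext (cum_int r x (S x))
        * indicator {x. S x < default_time \<gamma> E x \<or> default_time \<gamma> E x = \<infinity>} x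
        = F (E x, x)"
      using AE_space AE_exponential_pos[OF exponential] AE_hazard_neq_exponential[OF hazard_N]
    proof eventually_elim
      case (elim x)
      interpret hazard_path "sample_path \<gamma> x" using hazard_path_sample_path elim by simp
      have "(S x < default_time \<gamma> E x \<or> default_time \<gamma> E x = \<infinity>) \<longleftrightarrow> hazard x < ennreal (E x)"
        unfolding default_time_eq_hitting_time hazard_def
        by (rule hitting_time_survival_iff) (use elim S_nonneg in \<open>auto simp: hazard_def\<close>)
      then show ?case
        using cum_int_eq_cum_diff[OF elim(1) S_nonneg] elim(1)
        by (simp add: F_def gain_def neg_def indicator_def)
    qed
  qed
  also have "\<dots> = (\<integral>\<^sup>+x. (\<integral>\<^sup>+e. F (e, x) \<partial>?law) \<partial>M)"
    by (rule nn_integral_indep_exponential[OF F])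
  also have "\<dots> = (\<integral>\<^sup>+x. exp_ext (W x (S x)) \<partial>M)"
  proof (intro nn_integral_cong)
    fix x assume x: "x \<in> space M"
    have "{e. hazard x < ennreal e} \<in> sets borel" by (rule pred_Collect_borel) measurable
    then have "(\<integral>\<^sup>+e. F (e, x) \<partial>?law)
        = exp_ext (cum_diff (gain x) (neg x)) * emeasure ?law {e. hazard x < ennreal e}"
      by (subst nn_integral_cmult_indicator[symmetric])
        (auto intro!: nn_integral_cong simp: F_def indicator_def)
    also have "\<dots> = exp_ext (net_gain (gain x) (neg x + hazard x))"
      by (simp add: emeasure_exponential_gt[OF exponential] exp_ext_cum_diff_mult_exp_survival)
    also have "neg x + hazard x
        = (\<integral>\<^sup>+s\<in>time_upto (S x). loss_rate (sample_path r x) (sample_path \<gamma> x) s \<partial>lborel)"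
      unfolding neg_def hazard_def by (rule set_nn_integral_loss_rate[OF x sets_time_upto, symmetric])
    finally show "(\<integral>\<^sup>+e. F (e, x) \<partial>?law) = exp_ext (W x (S x))"
      by (simp add: log_payoff_def gain_def)
  qed
  finally show ?thesis .
qed

end

locale stopping_problem_C = stopping_problem +
  assumes condition_C: "(AE x in M. (\<integral>\<^sup>+s\<in>{0..}. ennreal (max 0 (r s x)) \<partial>lborel) < \<infinity>)
                        \<or> (AE x in M. \<tau> x < \<infinity>)"
begin

lemma AE_condition_C_sample_path:
  "AE x in M. entry_time (sample_path r x) (sample_path \<gamma> x) < \<infinity>
              \<or> (\<integral>\<^sup>+s\<in>{0..}. gain_rate (sample_path r x) s \<partial>lborel) \<noteq> \<infinity>"
proof -
  have "(\<integral>\<^sup>+s\<in>{0..}. gain_rate (sample_path r x) s \<partial>lborel) = (\<integral>\<^sup>+s\<in>{0..}. ennreal (max 0 (r s x)) \<partial>lborel)"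
    for x by (intro nn_integral_cong) (auto simp: gain_rate_def sample_path_def indicator_def)
  with condition_C show ?thesis
    by (auto simp: entry_time_sample_path elim!: eventually_mono)
qed

lemma AE_log_payoff_le_entry_time: "AE x in M. \<forall>T\<ge>0. W x T \<le> W x (\<tau> x)"
  using AE_space AE_condition_C_sample_path
proof eventually_elim
  case (elim x)
  interpret stopping_path "sample_path r x" "sample_path \<gamma> x"
    by (rule stopping_path_sample_path[OF elim(1)])
  show ?case using log_payoff_le_entry elim(2) by (simp add: entry_time_sample_path)
qed

lemma AE_log_payoff_before_entry_time_less: "AE x in M. \<forall>T. 0 \<le> T \<and> T < \<tau> x \<longrightarrow> W x T < W x (\<tau> x)"
  using AE_space AE_condition_C_sample_path
proof eventually_elim
  case (elim x)
  interpret stopping_path "sample_path r x" "sample_path \<gamma> x"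
    by (rule stopping_path_sample_path[OF elim(1)])
  show ?case using log_payoff_before_entry_less elim(2) by (simp add: entry_time_sample_path)
qed

lemma log_payoff_after_entry_time_less:
  assumes "x \<in> space M" and "strict_mono_on {0..} (\<lambda>t. \<gamma> t x - r t x)" and "\<tau> x < T"
  shows "W x T < W x (\<tau> x)"
proof -
  interpret stopping_path "sample_path r x" "sample_path \<gamma> x"
    by (rule stopping_path_sample_path[OF assms(1)])
  have "strict_mono_on {0..} (\<lambda>t. sample_path \<gamma> x t - sample_path r x t)"
    using assms(2) by (auto simp: strict_mono_on_def sample_path_def)
  with assms(3) show ?thesis using log_payoff_after_entry_less by (simp add: entry_time_sample_path)
qed

lemma payoff_le_entry_time:
  assumes "stopping_time_inf M G S"
  shows "payoff M r (default_time \<gamma> E) S \<le> payoff M r (default_time \<gamma> E) \<tau>"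
  unfolding payoff_eq_log_payoff[OF assms] payoff_eq_log_payoff[OF entry_time_stopping_time]
proof (rule nn_integral_mono_AE)
  show "AE x in M. exp_ext (W x (S x)) \<le> exp_ext (W x (\<tau> x))"
    using AE_space AE_log_payoff_le_entry_time
    by eventually_elim (use assms in \<open>auto simp: stopping_time_inf_def intro: exp_ext_mono\<close>)
qed

lemma entry_time_optimal: "optimal_stopping M G r (default_time \<gamma> E) \<tau>"
  unfolding optimal_stopping_def using entry_time_stopping_time payoff_le_entry_time by blast

text \<open>With a finite value, an optimal \<open>S\<close> has the same payoff as \<open>\<tau>\<close> while being pathwise
  dominated, so the pathwise payoffs agree almost surely.\<close>

lemma AE_optimal_log_payoff_eq:
  assumes "value_os M G r (default_time \<gamma> E) < \<infinity>" and S: "optimal_stopping M G r (default_time \<gamma> E) S"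
  shows "AE x in M. exp_ext (W x (S x)) = exp_ext (W x (\<tau> x))"
proof -
  have S_stop: "stopping_time_inf M G S" using S unfolding optimal_stopping_def by simp
  have "payoff M r (default_time \<gamma> E) \<tau> \<le> payoff M r (default_time \<gamma> E) S"
    using S entry_time_stopping_time unfolding optimal_stopping_def by blast
  with payoff_le_entry_time[OF S_stop]
  have eq: "(\<integral>\<^sup>+x. exp_ext (W x (S x)) \<partial>M) = (\<integral>\<^sup>+x. exp_ext (W x (\<tau> x)) \<partial>M)"
    unfolding payoff_eq_log_payoff[OF S_stop] payoff_eq_log_payoff[OF entry_time_stopping_time] by simp
  have "payoff M r (default_time \<gamma> E) \<tau> \<le> value_os M G r (default_time \<gamma> E)"
    unfolding value_os_def using entry_time_stopping_time by (intro SUP_upper) simp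
  with assms(1) have fin: "(\<integral>\<^sup>+x. exp_ext (W x (\<tau> x)) \<partial>M) \<noteq> \<infinity>"
    unfolding payoff_eq_log_payoff[OF entry_time_stopping_time] by auto
  have le: "AE x in M. exp_ext (W x (S x)) \<le> exp_ext (W x (\<tau> x))"
    using AE_space AE_log_payoff_le_entry_time
    by eventually_elim (use S_stop in \<open>auto simp: stopping_time_inf_def intro: exp_ext_mono\<close>)
  have "AE x in M. exp_ext (W x (\<tau> x)) \<le> exp_ext (W x (S x))"
  proof (rule ccontr)
    assume "\<not> ?thesis"
    then have "(\<integral>\<^sup>+x. exp_ext (W x (S x)) \<partial>M) < (\<integral>\<^sup>+x. exp_ext (W x (\<tau> x)) \<partial>M)"
      using fin eq le
      by (intro nn_integral_less measurable_exp_log_payoff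
               measurable_stopping_time_Ginf[OF filtration S_stop]
               measurable_stopping_time_Ginf[OF filtration entry_time_stopping_time]) auto
    with eq show False by simp
  qed
  with le show ?thesis by eventually_elim (rule antisym)
qed

lemma optimal_stopping_ge_entry_time:
  assumes "value_os M G r (default_time \<gamma> E) < \<infinity>" and "optimal_stopping M G r (default_time \<gamma> E) S"
  shows "AE x in M. \<tau> x \<le> S x"
  using AE_space AE_log_payoff_before_entry_time_less AE_optimal_log_payoff_eq[OF assms]
proof eventually_elim
  case (elim x)
  have "0 \<le> S x" using assms(2) elim(1) by (simp add: optimal_stopping_def stopping_time_inf_def)
  with elim show ?case using exp_ext_strict_mono by (metis less_irrefl not_le)
qed

lemma optimal_stopping_eq_entry_time:
  assumes "value_os M G r (default_time \<gamma> E) < \<infinity>"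
    and strict: "\<forall>x\<in>space M. strict_mono_on {0..} (\<lambda>t. \<gamma> t x - r t x)"
    and "optimal_stopping M G r (default_time \<gamma> E) S"
  shows "AE x in M. S x = \<tau> x"
  using AE_space AE_optimal_log_payoff_eq[OF assms(1,3)] optimal_stopping_ge_entry_time[OF assms(1,3)]
proof eventually_elim
  case (elim x)
  show ?case
  proof (rule ccontr)
    assume "S x \<noteq> \<tau> x"
    with elim(3) have "W x (S x) < W x (\<tau> x)"
      using log_payoff_after_entry_time_less[OF elim(1)] strict elim(1) by simp
    with elim(2) show False using exp_ext_strict_mono by fastforce
  qed
qed

end

theorem lemma2p1:
  fixes M :: "'a measure" and G :: "real \<Rightarrow> 'a measure"
    and E :: "'a \<Rightarrow> real" and r \<gamma> :: "real \<Rightarrow> 'a \<Rightarrow> real"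
  assumes "prob_space M"
    and "right_cont_filtration M G"
    and "distributed M lborel E (exponential_density 1)"
    and "prob_space.indep_set M {E -` B \<inter> space M | B. B \<in> sets borel} (Ginf M G)"
    and "progressive G r" and "loc_int_pathwise M r"
    and "progressive G \<gamma>" and "loc_int_pathwise M \<gamma>"
    and "\<forall>x\<in>space M. \<forall>t\<ge>0. 0 \<le> \<gamma> t x"
    and "\<forall>x\<in>space M. mono_on {0..} (\<lambda>t. \<gamma> t x - r t x)"
    and "(AE x in M. (\<integral>\<^sup>+ s\<in>{0..}. ennreal (max 0 (r s x)) \<partial>lborel) < \<infinity>)
         \<or> (AE x in M. Inf {ereal t | t. 0 \<le> t \<and> 0 \<le> \<gamma> t x - r t x} < \<infinity>)"
  shows "stopping_time_inf M G (\<lambda>x. Inf {ereal t | t. 0 \<le> t \<and> 0 \<le> \<gamma> t x - r t x})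
     \<and> optimal_stopping M G r (default_time \<gamma> E) (\<lambda>x. Inf {ereal t | t. 0 \<le> t \<and> 0 \<le> \<gamma> t x - r t x})
     \<and> (value_os M G r (default_time \<gamma> E) < \<infinity> \<longrightarrow>
          (\<forall>S. optimal_stopping M G r (default_time \<gamma> E) S \<longrightarrow>
               (AE x in M. Inf {ereal t | t. 0 \<le> t \<and> 0 \<le> \<gamma> t x - r t x} \<le> S x))
        \<and> ((\<forall>x\<in>space M. strict_mono_on {0..} (\<lambda>t. \<gamma> t x - r t x)) \<longrightarrow>
             (\<forall>S. optimal_stopping M G r (default_time \<gamma> E) S \<longrightarrow>
               (AE x in M. S x = Inf {ereal t | t. 0 \<le> t \<and> 0 \<le> \<gamma> t x - r t x}))))"
proof -
  have "stopping_problem_C M G E r \<gamma>"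
    using assms unfolding stopping_problem_C_def stopping_problem_C_axioms_def
      stopping_problem_def stopping_problem_axioms_def entry_time_def by blast
  then interpret stopping_problem_C M G E r \<gamma> .
  show ?thesis
    using entry_time_stopping_time entry_time_optimal
      optimal_stopping_ge_entry_time optimal_stopping_eq_entry_time
    unfolding entry_time_def by blast
qed

end
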